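(* Let $X$ and $Y$ be complete orthomodular lattices. Then (i) the set $\mathrm{Lin}(X,Y)$ of all linear maps $X\to Y$, ordered pointwise, is a complete lattice; and (ii) $\mathrm{Lin}(X)=\mathrm{Lin}(X,X)$, with composition as multiplication, the identity map as unit, pointwise joins, and involution $f\mapsto f^\star$, is a unital involutive quantale.
   Context: An ortholattice is a bounded lattice with an involutive order-reversing map $x\mapsto x^\perp$ satisfying $x\wedge x^\perp=0$; it is orthomodular if $x\le y$ implies $y=x\vee(x^\perp\wedge y)$. Write $x\perp y$ iff $x\le y^\perp$. A map $f\colon X\to Y$ between complete orthomodular lattices is linear if there is $h\colon Y\to X$ with $f(x)\perp y \iff x\perp h(y)$ for all $x,y$; such $h$ is unique, denoted $f^\star$. A quantale is a complete lattice $Q$ with an associative multiplication distributing over arbitrary joins on both sides; it is unital if it has $e$ with $e\cdot a=a=a\cdot e$ for all $a$; it is involutive if equipped with a semigroup involution $*$ (i.e. $a^{**}=a$, $(ab)^*=b^*a^*$) preserving arbitrary joins. *)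

theory Defs
  imports Main
begin

definition complete_oml :: "('a::complete_lattice \<Rightarrow> 'a) \<Rightarrow> bool" where
  "complete_oml oc \<longleftrightarrow>
     (\<forall>x. oc (oc x) = x) \<and>
     (\<forall>x y. x \<le> y \<longrightarrow> oc y \<le> oc x) \<and>
     (\<forall>x. inf x (oc x) = bot) \<and>
     (\<forall>x y. x \<le> y \<longrightarrow> y = sup x (inf (oc x) y))"

definition orth :: "('a::complete_lattice \<Rightarrow> 'a) \<Rightarrow> 'a \<Rightarrow> 'a \<Rightarrow> bool" where
  "orth oc x y \<longleftrightarrow> x \<le> oc y"

definition is_adjoint ::
  "('a::complete_lattice \<Rightarrow> 'a) \<Rightarrow> ('b::complete_lattice \<Rightarrow> 'b) \<Rightarrow> ('a \<Rightarrow> 'b) \<Rightarrow> ('b \<Rightarrow> 'a) \<Rightarrow> bool" where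
  "is_adjoint ocX ocY f h \<longleftrightarrow> (\<forall>x y. orth ocY (f x) y \<longleftrightarrow> orth ocX x (h y))"

definition linear_map ::
  "('a::complete_lattice \<Rightarrow> 'a) \<Rightarrow> ('b::complete_lattice \<Rightarrow> 'b) \<Rightarrow> ('a \<Rightarrow> 'b) \<Rightarrow> bool" where
  "linear_map ocX ocY f \<longleftrightarrow> (\<exists>h. is_adjoint ocX ocY f h)"

definition Lin ::
  "('a::complete_lattice \<Rightarrow> 'a) \<Rightarrow> ('b::complete_lattice \<Rightarrow> 'b) \<Rightarrow> ('a \<Rightarrow> 'b) set" where
  "Lin ocX ocY = {f. linear_map ocX ocY f}"

definition adj ::
  "('a::complete_lattice \<Rightarrow> 'a) \<Rightarrow> ('b::complete_lattice \<Rightarrow> 'b) \<Rightarrow> ('a \<Rightarrow> 'b) \<Rightarrow> ('b \<Rightarrow> 'a)" where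
  "adj ocX ocY f = (THE h. is_adjoint ocX ocY f h)"

definition complete_lattice_on :: "'q set \<Rightarrow> ('q \<Rightarrow> 'q \<Rightarrow> bool) \<Rightarrow> bool" where
  "complete_lattice_on Q le \<longleftrightarrow>
     (\<forall>a\<in>Q. le a a) \<and>
     (\<forall>a\<in>Q. \<forall>b\<in>Q. le a b \<and> le b a \<longrightarrow> a = b) \<and>
     (\<forall>a\<in>Q. \<forall>b\<in>Q. \<forall>c\<in>Q. le a b \<and> le b c \<longrightarrow> le a c) \<and>
     (\<forall>A\<subseteq>Q. \<exists>s\<in>Q. (\<forall>a\<in>A. le a s) \<and> (\<forall>u\<in>Q. (\<forall>a\<in>A. le a u) \<longrightarrow> le s u)) \<and>
     (\<forall>A\<subseteq>Q. \<exists>i\<in>Q. (\<forall>a\<in>A. le i a) \<and> (\<forall>l\<in>Q. (\<forall>a\<in>A. le l a) \<longrightarrow> le l i))"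

definition unital_involutive_quantale_on ::
  "'q set \<Rightarrow> ('q \<Rightarrow> 'q \<Rightarrow> bool) \<Rightarrow> ('q set \<Rightarrow> 'q) \<Rightarrow> ('q \<Rightarrow> 'q \<Rightarrow> 'q) \<Rightarrow> 'q \<Rightarrow> ('q \<Rightarrow> 'q) \<Rightarrow> bool"
  where
  "unital_involutive_quantale_on Q le J m e invo \<longleftrightarrow>
     complete_lattice_on Q le \<and>
     (\<forall>A\<subseteq>Q. J A \<in> Q \<and> (\<forall>a\<in>A. le a (J A)) \<and> (\<forall>u\<in>Q. (\<forall>a\<in>A. le a u) \<longrightarrow> le (J A) u)) \<and>
     (\<forall>a\<in>Q. \<forall>b\<in>Q. m a b \<in> Q) \<and>
     (\<forall>a\<in>Q. \<forall>b\<in>Q. \<forall>c\<in>Q. m (m a b) c = m a (m b c)) \<and>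
     (\<forall>a\<in>Q. \<forall>A\<subseteq>Q. m a (J A) = J ((\<lambda>b. m a b) ` A) \<and> m (J A) a = J ((\<lambda>b. m b a) ` A)) \<and>
     e \<in> Q \<and> (\<forall>a\<in>Q. m e a = a \<and> m a e = a) \<and>
     (\<forall>a\<in>Q. invo a \<in> Q \<and> invo (invo a) = a) \<and>
     (\<forall>a\<in>Q. \<forall>b\<in>Q. invo (m a b) = m (invo b) (invo a)) \<and>
     (\<forall>A\<subseteq>Q. invo (J A) = J (invo ` A))"

end

theory Submission
  imports Defs
begin

text \<open>Adjoints of linear maps are linear, involutive and reverse composition. Through the
adjunction \<open>f x \<le> y\<^sup>\<perp> \<longleftrightarrow> x \<le> (f\<^sup>\<star> y)\<^sup>\<perp>\<close>, every linear map preserves arbitrary joins,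
and the pointwise join of linear maps is linear with adjoint the pointwise join of the
adjoints. So the linear maps form a join-closed subset of the complete lattice of all maps,
composition distributes over joins, and the involution preserves joins.\<close>

lemma complete_oml_oc_oc: "complete_oml oc \<Longrightarrow> oc (oc x) = x"
  by (simp add: complete_oml_def)

lemma complete_oml_le_oc_commute: "complete_oml oc \<Longrightarrow> x \<le> oc y \<longleftrightarrow> y \<le> oc x"
  unfolding complete_oml_def by metis

lemma complete_oml_eq_iff_le_oc:
  assumes "complete_oml oc" and "\<And>z. x \<le> oc z \<longleftrightarrow> y \<le> oc z"
  shows "x = y"
  by (metis assms complete_oml_oc_oc order_antisym order_refl)

lemma is_adjoint_unique:
  assumes "complete_oml ocX" and "is_adjoint ocX ocY f h1" and "is_adjoint ocX ocY f h2"
  shows "h1 = h2"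
proof
  fix y
  have "x \<le> ocX (h1 y) \<longleftrightarrow> x \<le> ocX (h2 y)" for x
    using assms(2,3) unfolding is_adjoint_def orth_def by blast
  then have "ocX (h1 y) = ocX (h2 y)" by (meson order_antisym order_refl)
  then show "h1 y = h2 y" by (metis assms(1) complete_oml_oc_oc)
qed

lemma adj_eqI:
  assumes "complete_oml ocX" and "is_adjoint ocX ocY f h"
  shows "adj ocX ocY f = h"
  unfolding adj_def using assms is_adjoint_unique by blast

lemma is_adjoint_adj:
  assumes "complete_oml ocX" and "f \<in> Lin ocX ocY"
  shows "is_adjoint ocX ocY f (adj ocX ocY f)"
  using assms adj_eqI unfolding Lin_def linear_map_def by fastforce

lemma is_adjoint_sym:
  assumes "complete_oml ocX" and "complete_oml ocY" and "is_adjoint ocX ocY f h"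
  shows "is_adjoint ocY ocX h f"
  using assms complete_oml_le_oc_commute unfolding is_adjoint_def orth_def by metis

lemma is_adjoint_comp:
  assumes "is_adjoint ocY ocZ g hg" and "is_adjoint ocX ocY f hf"
  shows "is_adjoint ocX ocZ (g \<circ> f) (hf \<circ> hg)"
  using assms unfolding is_adjoint_def orth_def by simp

lemma is_adjoint_id: "is_adjoint oc oc id id"
  unfolding is_adjoint_def orth_def by simp

lemma is_adjoint_Sup:
  assumes "complete_oml ocX" and "A \<subseteq> Lin ocX ocY"
  shows "is_adjoint ocX ocY (Sup A) (Sup (adj ocX ocY ` A))"
  unfolding is_adjoint_def orth_def
proof (intro allI)
  fix x y
  have "Sup A x \<le> ocY y \<longleftrightarrow> (\<forall>f\<in>A. f x \<le> ocY y)" by (simp add: SUP_le_iff)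
  also have "\<dots> \<longleftrightarrow> (\<forall>f\<in>A. x \<le> ocX (adj ocX ocY f y))"
    using is_adjoint_adj[OF assms(1)] assms(2) unfolding is_adjoint_def orth_def by blast
  also have "\<dots> \<longleftrightarrow> (\<forall>f\<in>A. adj ocX ocY f y \<le> ocX x)"
    using complete_oml_le_oc_commute[OF assms(1)] by blast
  also have "\<dots> \<longleftrightarrow> Sup (adj ocX ocY ` A) y \<le> ocX x" by (simp add: SUP_le_iff image_image)
  also have "\<dots> \<longleftrightarrow> x \<le> ocX (Sup (adj ocX ocY ` A) y)"
    using complete_oml_le_oc_commute[OF assms(1)] by blast
  finally show "Sup A x \<le> ocY y \<longleftrightarrow> x \<le> ocX (Sup (adj ocX ocY ` A) y)" .
qed

lemma is_adjoint_imp_Lin: "is_adjoint ocX ocY f h \<Longrightarrow> f \<in> Lin ocX ocY"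
  unfolding Lin_def linear_map_def by blast

lemma Sup_in_Lin: "complete_oml ocX \<Longrightarrow> A \<subseteq> Lin ocX ocY \<Longrightarrow> Sup A \<in> Lin ocX ocY"
  by (blast intro: is_adjoint_imp_Lin is_adjoint_Sup)

lemma adj_Sup:
  "complete_oml ocX \<Longrightarrow> A \<subseteq> Lin ocX ocY \<Longrightarrow> adj ocX ocY (Sup A) = Sup (adj ocX ocY ` A)"
  by (blast intro: adj_eqI is_adjoint_Sup)

lemma id_in_Lin: "id \<in> Lin oc oc"
  by (rule is_adjoint_imp_Lin[OF is_adjoint_id])

lemma
  assumes "complete_oml ocX" and "complete_oml ocY" and "f \<in> Lin ocX ocY"
  shows adj_in_Lin: "adj ocX ocY f \<in> Lin ocY ocX"
    and adj_adj: "adj ocY ocX (adj ocX ocY f) = f"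
proof -
  have "is_adjoint ocY ocX (adj ocX ocY f) f"
    by (rule is_adjoint_sym[OF assms(1,2) is_adjoint_adj[OF assms(1,3)]])
  then show "adj ocX ocY f \<in> Lin ocY ocX" and "adj ocY ocX (adj ocX ocY f) = f"
    by (simp_all add: is_adjoint_imp_Lin adj_eqI[OF assms(2)])
qed

lemma
  assumes "complete_oml ocX" and "complete_oml ocY" and "g \<in> Lin ocY ocZ" and "f \<in> Lin ocX ocY"
  shows comp_in_Lin: "g \<circ> f \<in> Lin ocX ocZ"
    and adj_comp: "adj ocX ocZ (g \<circ> f) = adj ocX ocY f \<circ> adj ocY ocZ g"
proof -
  have "is_adjoint ocX ocZ (g \<circ> f) (adj ocX ocY f \<circ> adj ocY ocZ g)"
    by (rule is_adjoint_comp[OF is_adjoint_adj[OF assms(2,3)] is_adjoint_adj[OF assms(1,4)]])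
  then show "g \<circ> f \<in> Lin ocX ocZ" and "adj ocX ocZ (g \<circ> f) = adj ocX ocY f \<circ> adj ocY ocZ g"
    by (simp_all add: is_adjoint_imp_Lin adj_eqI[OF assms(1)])
qed

lemma Lin_preserves_Sup:
  assumes "complete_oml ocX" and "complete_oml ocY" and "f \<in> Lin ocX ocY"
  shows "f (Sup S) = Sup (f ` S)"
proof (rule complete_oml_eq_iff_le_oc[OF assms(2)])
  fix y
  have adjunction: "f x \<le> ocY y \<longleftrightarrow> x \<le> ocX (adj ocX ocY f y)" for x
    using is_adjoint_adj[OF assms(1,3)] unfolding is_adjoint_def orth_def by blast
  have "f (Sup S) \<le> ocY y \<longleftrightarrow> Sup S \<le> ocX (adj ocX ocY f y)" by (fact adjunction)
  also have "\<dots> \<longleftrightarrow> (\<forall>s\<in>S. f s \<le> ocY y)" by (simp add: Sup_le_iff adjunction)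
  also have "\<dots> \<longleftrightarrow> Sup (f ` S) \<le> ocY y" by (simp add: SUP_le_iff)
  finally show "f (Sup S) \<le> ocY y \<longleftrightarrow> Sup (f ` S) \<le> ocY y" .
qed

lemma comp_Sup_distrib_left:
  assumes "\<And>S. f (Sup S) = Sup (f ` S)"
  shows "f \<circ> Sup A = Sup ((\<circ>) f ` A)"
  by (rule ext) (simp add: assms image_image)

lemma comp_Sup_distrib_right: "Sup A \<circ> f = Sup ((\<lambda>g. g \<circ> f) ` A)"
  by (rule ext) (simp add: image_image)

lemma complete_lattice_on_Sup_closed:
  fixes Q :: "'a::complete_lattice set"
  assumes "\<And>A. A \<subseteq> Q \<Longrightarrow> Sup A \<in> Q"
  shows "complete_lattice_on Q (\<le>)"
  unfolding complete_lattice_on_def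
proof (intro conjI ballI allI impI)
  fix A assume "A \<subseteq> Q"
  then show "\<exists>s\<in>Q. (\<forall>a\<in>A. a \<le> s) \<and> (\<forall>u\<in>Q. (\<forall>a\<in>A. a \<le> u) \<longrightarrow> s \<le> u)"
    using assms by (auto intro: Sup_upper Sup_least)
  text \<open>Meets in \<open>Q\<close> are joins of lower bounds, not the ambient meets.\<close>
  show "\<exists>i\<in>Q. (\<forall>a\<in>A. i \<le> a) \<and> (\<forall>l\<in>Q. (\<forall>a\<in>A. l \<le> a) \<longrightarrow> l \<le> i)"
    by (rule bexI[of _ "Sup {l \<in> Q. \<forall>a\<in>A. l \<le> a}"]) (auto intro: Sup_upper Sup_least assms)
qed auto

lemma complete_lattice_on_Lin: "complete_oml ocX \<Longrightarrow> complete_lattice_on (Lin ocX ocY) (\<le>)"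
  by (simp add: complete_lattice_on_Sup_closed Sup_in_Lin)

lemma unital_involutive_quantale_on_Lin:
  assumes "complete_oml oc"
  shows "unital_involutive_quantale_on (Lin oc oc) (\<le>) Sup (\<circ>) id (adj oc oc)"
proof -
  have "a \<circ> Sup A = Sup ((\<circ>) a ` A)" if "a \<in> Lin oc oc" for a A
    using comp_Sup_distrib_left Lin_preserves_Sup[OF assms assms that] by blast
  then show ?thesis
    unfolding unital_involutive_quantale_on_def
    using assms complete_lattice_on_Lin Sup_in_Lin id_in_Lin adj_in_Lin adj_adj comp_in_Lin
      adj_comp adj_Sup comp_Sup_distrib_right
    by (auto intro: Sup_upper Sup_least simp: o_assoc)
qed

theorem mainTheorem3:
  fixes ocX :: "'a::complete_lattice \<Rightarrow> 'a" and ocY :: "'b::complete_lattice \<Rightarrow> 'b"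
  assumes "complete_oml ocX" and "complete_oml ocY"
  shows "complete_lattice_on (Lin ocX ocY) (\<le>) \<and>
         unital_involutive_quantale_on (Lin ocX ocX) (\<le>) Sup (\<circ>) id (adj ocX ocX)"
  using assms(1) complete_lattice_on_Lin unital_involutive_quantale_on_Lin by blast

end
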